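(* Fix integers $m\ge d\ge1$, $\lambda=d/m$, and $\sigma>0$. Let $p_1,p_2,\dots$ be monic polynomials of degree $d$, $p_i(x)=\prod_{j=1}^d(x-r_{i,j}^2)$ with $r_{i,j}$ real, such that $\frac1d\sum_jr_{i,j}^2=\sigma^2$ for all $i$. For $N\ge1$ let $P_N=p_1\boxplus_{d,\lambda}\cdots\boxplus_{d,\lambda}p_N$ and let $\widetilde P_N$ be the monic polynomial of degree $2d$ whose roots are the roots of $\mathbb{S}P_N$ multiplied by $1/\sqrt N$. Then, as $N\to\infty$, $\widetilde P_N$ converges coefficientwise to the monic polynomial whose roots are those of $x\mapsto L_d^{(m-d)}\!\big(\tfrac{m x^2}{\sigma^2}\big)$.
   Context: $(p\boxplus_{d,\lambda}q)(x)=\sum_{k=0}^dx^{d-k}(-1)^k\sum_{i+j=k}\frac{(d-i)!(d-j)!}{d!(d-k)!}\frac{(m-i)!(m-j)!}{m!(m-k)!}a_ib_j$ for $p=\sum(-1)^ia_ix^{d-i}$, $q=\sum(-1)^ib_ix^{d-i}$; associative, bilinear, preserves monic polynomials with nonnegative roots. $\mathbb{S}P(x)=P(x^2)$. Generalized Laguerre polynomial: $L_d^{(\alpha)}(x)=\sum_{i=0}^d\binom{d+\alpha}{d-i}\frac{(-x)^i}{i!}$. *)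

theory Defs
  imports "HOL-Analysis.Analysis" "HOL-Computational_Algebra.Polynomial"
begin

text \<open>Signed coefficients: for p of degree d, p = sum (-1)^i a_i x^(d-i), so
  a_i = (-1)^i * coeff p (d - i).\<close>
definition sgn_coeff :: "nat \<Rightarrow> real poly \<Rightarrow> nat \<Rightarrow> real" where
  "sgn_coeff d p i = (-1) ^ i * coeff p (d - i)"

text \<open>Rectangular finite free additive convolution with parameters d, m (lambda = d/m).\<close>
definition rect_conv :: "nat \<Rightarrow> nat \<Rightarrow> real poly \<Rightarrow> real poly \<Rightarrow> real poly" where
  "rect_conv d m p q =
     (\<Sum>k\<le>d. monom ((-1) ^ k *
        (\<Sum>i\<le>k. (fact (d - i) * fact (d - (k - i)) / (fact d * fact (d - k))) *
                  (fact (m - i) * fact (m - (k - i)) / (fact m * fact (m - k))) *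
                  sgn_coeff d p i * sgn_coeff d q (k - i))) (d - k))"

text \<open>Iterated convolution: rect_iter d m p n = p 1 \<boxplus> ... \<boxplus> p (n+1).\<close>
primrec rect_iter :: "nat \<Rightarrow> nat \<Rightarrow> (nat \<Rightarrow> real poly) \<Rightarrow> nat \<Rightarrow> real poly" where
  "rect_iter d m p 0 = p 1"
| "rect_iter d m p (Suc n) = rect_conv d m (rect_iter d m p n) (p (Suc (Suc n)))"

definition P_N :: "nat \<Rightarrow> nat \<Rightarrow> (nat \<Rightarrow> real poly) \<Rightarrow> nat \<Rightarrow> real poly" where
  "P_N d m p N = rect_iter d m p (N - 1)"

definition Sop :: "real poly \<Rightarrow> real poly" where
  "Sop P = pcompose P [:0, 0, 1:]"

text \<open>Monic polynomial of degree 2d whose roots are those of the monic degree-2d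
  polynomial Q, multiplied by 1/sqrt N: x \<mapsto> N^(-d) Q(sqrt N x).\<close>
definition scale_roots :: "nat \<Rightarrow> real \<Rightarrow> real poly \<Rightarrow> real poly" where
  "scale_roots d c Q = smult (1 / c ^ (2 * d)) (pcompose Q [:0, c:])"

definition P_tilde :: "nat \<Rightarrow> nat \<Rightarrow> (nat \<Rightarrow> real poly) \<Rightarrow> nat \<Rightarrow> real poly" where
  "P_tilde d m p N = scale_roots d (sqrt (real N)) (Sop (P_N d m p N))"

definition laguerre :: "nat \<Rightarrow> nat \<Rightarrow> real poly" where
  "laguerre d \<alpha> = (\<Sum>i\<le>d. monom (real ((d + \<alpha>) choose (d - i)) * (-1) ^ i / fact i) i)"

definition laguerre_limit :: "nat \<Rightarrow> nat \<Rightarrow> real \<Rightarrow> real poly" where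
  "laguerre_limit d m \<sigma> =
     (let L = pcompose (laguerre d (m - d)) [:0, 0, real m / \<sigma>^2:]
      in smult (1 / lead_coeff L) L)"

end

theory Submission
  imports Defs
begin

text \<open>
  Weight the signed coefficients a_k of a polynomial of degree d by
  w_k = (d-k)! (m-k)! / (d! m!). In these coordinates the rectangular convolution is the
  Cauchy product of coefficient sequences (truncated at degree d), so the weighted coefficients
  of P_N are those of a product of N polynomials 1 + (\<sigma>^2/m) x + ... whose coefficients are
  bounded uniformly. The k-th coefficient of such a product is
  (N choose k) (\<sigma>^2/m)^k + O(N^(k-1)), so divided by N^k it tends to (\<sigma>^2/m)^k / k!.
  Undoing the weights and the substitution x \<mapsto> \<surd>N x^2 gives the coefficients of
  L_d^(m-d)(m x^2 / \<sigma>^2), normalised to be monic.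
\<close>

section \<open>Polynomially bounded sequences\<close>

definition poly_bounded :: "nat \<Rightarrow> (nat \<Rightarrow> real) \<Rightarrow> bool" where
  "poly_bounded j f \<longleftrightarrow> (\<exists>K. \<forall>n. \<bar>f n\<bar> \<le> K * real (Suc n) ^ j)"

lemma poly_boundedI: "(\<And>n. \<bar>f n\<bar> \<le> K * real (Suc n) ^ j) \<Longrightarrow> poly_bounded j f"
  unfolding poly_bounded_def by blast

lemma poly_boundedE:
  assumes "poly_bounded j f"
  obtains K where "K \<ge> 0" "\<And>n. \<bar>f n\<bar> \<le> K * real (Suc n) ^ j"
proof -
  from assms obtain K where K: "\<And>n. \<bar>f n\<bar> \<le> K * real (Suc n) ^ j"
    unfolding poly_bounded_def by blast
  moreover have "K \<ge> 0" using K[of 0] by simp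
  ultimately show thesis using that by blast
qed

lemma poly_bounded_mono:
  assumes "poly_bounded i f" "i \<le> j"
  shows "poly_bounded j f"
proof -
  obtain K where K: "K \<ge> 0" "\<And>n. \<bar>f n\<bar> \<le> K * real (Suc n) ^ i"
    using assms(1) by (elim poly_boundedE) blast
  have "K * real (Suc n) ^ i \<le> K * real (Suc n) ^ j" for n
    using K(1) assms(2) by (intro mult_left_mono power_increasing) auto
  with K(2) show ?thesis by (meson order_trans poly_boundedI)
qed

lemma poly_bounded_add:
  assumes "poly_bounded j f" "poly_bounded j g"
  shows "poly_bounded j (\<lambda>n. f n + g n)"
proof -
  obtain K where K: "\<And>n. \<bar>f n\<bar> \<le> K * real (Suc n) ^ j" using assms(1) by (elim poly_boundedE) blast
  obtain L where L: "\<And>n. \<bar>g n\<bar> \<le> L * real (Suc n) ^ j" using assms(2) by (elim poly_boundedE) blast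
  have "\<bar>f n + g n\<bar> \<le> (K + L) * real (Suc n) ^ j" for n
    using abs_triangle_ineq[of "f n" "g n"] K[of n] L[of n] by (simp add: distrib_right)
  then show ?thesis by (rule poly_boundedI)
qed

lemma poly_bounded_sum:
  assumes "\<And>i. i \<in> A \<Longrightarrow> poly_bounded j (f i)"
  shows "poly_bounded j (\<lambda>n. \<Sum>i\<in>A. f i n)"
  using assms
proof (induction A rule: infinite_finite_induct)
  case (insert x F)
  then show ?case by (simp add: poly_bounded_add)
qed (simp_all add: poly_boundedI[of _ 0])

lemma poly_bounded_mult_bounded:
  assumes "poly_bounded j f" "\<And>n. \<bar>g n\<bar> \<le> M"
  shows "poly_bounded j (\<lambda>n. f n * g n)"
proof -
  obtain K where K: "K \<ge> 0" "\<And>n. \<bar>f n\<bar> \<le> K * real (Suc n) ^ j"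
    using assms(1) by (elim poly_boundedE) blast
  have "\<bar>f n * g n\<bar> \<le> (K * real (Suc n) ^ j) * M" for n
    unfolding abs_mult using K assms(2) by (intro mult_mono) auto
  then show ?thesis by (intro poly_boundedI[of _ "K * M"]) (simp add: algebra_simps)
qed

lemma poly_bounded_cmult: "poly_bounded j f \<Longrightarrow> poly_bounded j (\<lambda>n. c * f n)"
  using poly_bounded_mult_bounded[of j f "\<lambda>_. c" "\<bar>c\<bar>"] by (simp add: mult.commute)

lemma poly_bounded_binomial: "poly_bounded k (\<lambda>n. real (Suc n choose k) * c)"
proof (rule poly_boundedI[of _ "\<bar>c\<bar>"])
  fix n
  have "Suc n choose k \<le> Suc n ^ k"
    by (cases "k \<le> Suc n") (simp_all add: binomial_le_pow binomial_eq_0)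
  then have "real (Suc n choose k) \<le> real (Suc n) ^ k"
    by (metis of_nat_le_iff of_nat_power)
  then show "\<bar>real (Suc n choose k) * c\<bar> \<le> \<bar>c\<bar> * real (Suc n) ^ k"
    by (simp add: abs_mult mult.commute mult_left_mono)
qed

lemma poly_bounded_Suc_of_diff:
  assumes "poly_bounded j (\<lambda>n. e (Suc n) - e n)"
  shows "poly_bounded (Suc j) e"
proof -
  obtain K where K: "K \<ge> 0" "\<And>n. \<bar>e (Suc n) - e n\<bar> \<le> K * real (Suc n) ^ j"
    using assms by (elim poly_boundedE) blast
  show ?thesis
  proof (rule poly_boundedI[of _ "\<bar>e 0\<bar> + K"])
    fix n
    have "\<bar>e n - e 0\<bar> = \<bar>\<Sum>l<n. e (Suc l) - e l\<bar>"
      by (simp add: sum_lessThan_telescope)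
    also have "\<dots> \<le> (\<Sum>l<n. K * real (Suc n) ^ j)"
    proof (rule order_trans[OF sum_abs sum_mono])
      fix l assume "l \<in> {..<n}"
      then have "K * real (Suc l) ^ j \<le> K * real (Suc n) ^ j"
        using K(1) by (intro mult_left_mono power_mono) auto
      then show "\<bar>e (Suc l) - e l\<bar> \<le> K * real (Suc n) ^ j" using K(2)[of l] by linarith
    qed
    also have "\<dots> \<le> K * real (Suc n) ^ Suc j"
      using K(1) by (simp add: mult_left_mono mult.left_commute)
    finally have "\<bar>e n\<bar> \<le> \<bar>e 0\<bar> + K * real (Suc n) ^ Suc j" by linarith
    moreover have "\<bar>e 0\<bar> \<le> \<bar>e 0\<bar> * real (Suc n) ^ Suc j"
      using mult_left_mono[OF one_le_power[of "real (Suc n)" "Suc j"], of "\<bar>e 0\<bar>"] by simp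
    ultimately show "\<bar>e n\<bar> \<le> (\<bar>e 0\<bar> + K) * real (Suc n) ^ Suc j"
      by (simp add: distrib_right)
  qed
qed

lemma poly_bounded_divide_power_tendsto_0:
  assumes "poly_bounded j e"
  shows "(\<lambda>n. e n / real (Suc n) ^ Suc j) \<longlonglongrightarrow> 0"
proof -
  obtain K where K: "K \<ge> 0" "\<And>n. \<bar>e n\<bar> \<le> K * real (Suc n) ^ j"
    using assms by (elim poly_boundedE) blast
  have "norm (e n / real (Suc n) ^ Suc j) \<le> K / real (Suc n)" for n
    using divide_right_mono[OF K(2)[of n], of "real (Suc n) ^ Suc j"]
    by (simp del: of_nat_Suc)
  then show ?thesis
    by (intro Lim_null_comparison[OF always_eventually LIMSEQ_Suc[OF lim_const_over_n]]) auto
qed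

lemma binomial_divide_power_tendsto:
  "(\<lambda>n. real (Suc n choose k) / real (Suc n) ^ k) \<longlonglongrightarrow> 1 / fact k"
proof -
  have eq: "real (Suc n choose k) / real (Suc n) ^ k
      = (\<Prod>i<k. 1 - real i / real (Suc n)) / fact k" for n
  proof -
    have "(\<Prod>i<k. 1 - real i / real (Suc n)) = (\<Prod>i<k. (real (Suc n) - real i) / real (Suc n))"
      by (rule prod.cong) (simp_all add: field_simps del: of_nat_Suc)
    also have "\<dots> = (\<Prod>i<k. real (Suc n) - real i) / real (Suc n) ^ k"
      by (simp add: prod_dividef)
    also have "(\<Prod>i<k. real (Suc n) - real i) = real (Suc n choose k) * fact k"
      by (simp add: binomial_gbinomial gbinomial_prod_rev atLeast0LessThan)
    finally show ?thesis by simp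
  qed
  have "(\<lambda>n. (\<Prod>i<k. 1 - real i / real (Suc n)) / fact k) \<longlonglongrightarrow> (\<Prod>i<k. 1 - 0) / fact k"
    by (intro tendsto_divide tendsto_prod tendsto_diff tendsto_const
        LIMSEQ_Suc[OF lim_const_over_n]) auto
  then show ?thesis unfolding eq by simp
qed

section \<open>Products of polynomials with a common linear coefficient\<close>

locale truncated_convolution_chain =
  fixes d :: nat and s M :: real and \<alpha> \<beta> :: "nat \<Rightarrow> nat \<Rightarrow> real"
  assumes \<beta>_0: "\<beta> n 0 = 1"
    and \<beta>_1: "\<beta> n 1 = s"
    and \<beta>_bounded: "\<bar>\<beta> n k\<bar> \<le> M"
    and \<alpha>_0: "k \<le> d \<Longrightarrow> \<alpha> 0 k = \<beta> 0 k"
    and \<alpha>_Suc: "k \<le> d \<Longrightarrow> \<alpha> (Suc n) k = (\<Sum>i\<le>k. \<alpha> n i * \<beta> (Suc n) (k - i))"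
begin

definition binomial_error :: "nat \<Rightarrow> nat \<Rightarrow> real" where
  "binomial_error n k = \<alpha> n k - real (Suc n choose k) * s ^ k"

lemma \<alpha>_0_eq_1: "\<alpha> n 0 = 1"
  by (induction n) (simp_all add: \<alpha>_0 \<beta>_0 \<alpha>_Suc)

lemma binomial_error_0: "binomial_error n 0 = 0"
  by (simp add: binomial_error_def \<alpha>_0_eq_1)

lemma binomial_error_1:
  assumes "1 \<le> d"
  shows "binomial_error n 1 = 0"
proof -
  have "\<alpha> n 1 = real (Suc n) * s"
  proof (induction n)
    case 0
    then show ?case using assms \<beta>_1[of 0] by (simp add: \<alpha>_0)
  next
    case (Suc n)
    then show ?case using assms \<alpha>_Suc[of 1 n] \<beta>_1[of "Suc n"]
      by (simp add: \<alpha>_0_eq_1 \<beta>_0 algebra_simps)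
  qed
  then show ?thesis by (simp add: binomial_error_def)
qed

lemma binomial_error_Suc_diff:
  assumes "Suc (Suc k) \<le> d"
  shows "binomial_error (Suc n) (Suc (Suc k)) - binomial_error n (Suc (Suc k))
    = s * binomial_error n (Suc k) + (\<Sum>i\<le>k. \<alpha> n i * \<beta> (Suc n) (Suc (Suc k) - i))"
proof -
  have "\<alpha> (Suc n) (Suc (Suc k))
      = (\<Sum>i\<le>k. \<alpha> n i * \<beta> (Suc n) (Suc (Suc k) - i)) + \<alpha> n (Suc k) * s + \<alpha> n (Suc (Suc k))"
    using \<alpha>_Suc[OF assms, of n] \<beta>_0 \<beta>_1 by simp
  then show ?thesis by (simp add: binomial_error_def algebra_simps)
qed

lemma binomial_error_poly_bounded: "k \<le> d \<Longrightarrow> poly_bounded (k - 1) (\<lambda>n. binomial_error n k)"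
proof (induction k rule: less_induct)
  case (less k)
  consider "k = 0" | "k = 1" | k' where "k = Suc (Suc k')"
    by (metis One_nat_def not0_implies_Suc)
  then show ?case
  proof cases
    case 1
    then show ?thesis by (simp add: binomial_error_0 poly_boundedI[of _ 0])
  next
    case 2
    with less.prems binomial_error_1 have "binomial_error n k = 0" for n by simp
    then show ?thesis by (simp add: poly_boundedI[of _ 0])
  next
    case 3
    have "poly_bounded k' (\<lambda>n. \<alpha> n i)" if "i \<le> k'" for i
    proof -
      have "poly_bounded i (\<lambda>n. binomial_error n i)"
        using less.IH[of i] less.prems 3 that poly_bounded_mono[of "i - 1" _ i] by simp
      then have "poly_bounded i (\<lambda>n. binomial_error n i + real (Suc n choose i) * s ^ i)"
        using poly_bounded_binomial by (rule poly_bounded_add)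
      then show ?thesis using that by (simp add: binomial_error_def poly_bounded_mono)
    qed
    then have "poly_bounded k' (\<lambda>n. \<Sum>i\<le>k'. \<alpha> n i * \<beta> (Suc n) (k - i))"
      by (intro poly_bounded_sum poly_bounded_mult_bounded[OF _ \<beta>_bounded]) simp
    moreover have "poly_bounded k' (\<lambda>n. s * binomial_error n (Suc k'))"
      using less.IH[of "Suc k'"] less.prems 3 by (simp add: poly_bounded_cmult)
    ultimately have "poly_bounded k' (\<lambda>n. binomial_error (Suc n) k - binomial_error n k)"
      using binomial_error_Suc_diff less.prems 3
      by (simp add: poly_bounded_add add.commute)
    then show ?thesis using 3 by (simp add: poly_bounded_Suc_of_diff)
  qed
qed

lemma \<alpha>_divide_power_tendsto:
  assumes "k \<le> d"
  shows "(\<lambda>n. \<alpha> n k / real (Suc n) ^ k) \<longlonglongrightarrow> s ^ k / fact k"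
proof (cases k)
  case 0
  then show ?thesis by (simp add: \<alpha>_0_eq_1)
next
  case (Suc j)
  have "\<alpha> n k / real (Suc n) ^ k
      = s ^ k * (real (Suc n choose k) / real (Suc n) ^ k)
        + binomial_error n k / real (Suc n) ^ k" for n
    by (simp add: binomial_error_def field_simps del: of_nat_Suc)
  moreover have "poly_bounded j (\<lambda>n. binomial_error n k)"
    using binomial_error_poly_bounded[OF assms] Suc by simp
  then have "(\<lambda>n. binomial_error n k / real (Suc n) ^ k) \<longlonglongrightarrow> 0"
    unfolding Suc by (rule poly_bounded_divide_power_tendsto_0)
  ultimately show ?thesis
    using tendsto_add[OF tendsto_mult_left[OF binomial_divide_power_tendsto]] by fastforce
qed

end

section \<open>Weighted coefficients of the rectangular convolution\<close>

definition rect_weight :: "nat \<Rightarrow> nat \<Rightarrow> nat \<Rightarrow> real" where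
  "rect_weight d m k = fact (d - k) * fact (m - k) / (fact d * fact m)"

definition rect_coeff :: "nat \<Rightarrow> nat \<Rightarrow> real poly \<Rightarrow> nat \<Rightarrow> real" where
  "rect_coeff d m p k = rect_weight d m k * sgn_coeff d p k"

lemma rect_weight_pos: "rect_weight d m k > 0"
  by (simp add: rect_weight_def)

lemma rect_weight_le_1: "rect_weight d m k \<le> 1"
proof -
  have "fact (d - k) * fact (m - k) \<le> (fact d * fact m :: real)"
    by (intro mult_mono fact_mono) auto
  then show ?thesis by (simp add: rect_weight_def)
qed

lemma rect_weight_0: "rect_weight d m 0 = 1"
  by (simp add: rect_weight_def)

lemma rect_weight_1:
  assumes "1 \<le> d" "1 \<le> m"
  shows "rect_weight d m 1 = 1 / (real d * real m)"
  using assms by (simp add: rect_weight_def fact_reduce[of d] fact_reduce[of m])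

lemma coeff_sum_monom_reversed:
  assumes "k \<le> d"
  shows "coeff (\<Sum>i\<le>d. monom (c i) (d - i)) (d - k) = c k"
proof -
  have "coeff (\<Sum>i\<le>d. monom (c i) (d - i)) (d - k) = (\<Sum>i\<le>d. if i = k then c i else 0)"
    unfolding coeff_sum coeff_monom by (rule sum.cong) (use assms in auto)
  then show ?thesis using assms by simp
qed

lemma coeff_sum_monom_reversed_eq_0:
  "d < j \<Longrightarrow> coeff (\<Sum>i\<le>d. monom (c i) (d - i)) j = 0"
  by (auto simp: coeff_sum coeff_monom intro!: sum.neutral)

lemma rect_conv_weight_eq:
  "(fact (d - i) * fact (d - (k - i)) / (fact d * fact (d - k))) *
     (fact (m - i) * fact (m - (k - i)) / (fact m * fact (m - k)))
   = rect_weight d m i * rect_weight d m (k - i) / rect_weight d m k"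
  by (simp add: rect_weight_def field_simps)

lemma rect_conv_eq_rect_coeff_convolution:
  "rect_conv d m p q = (\<Sum>k\<le>d. monom ((-1) ^ k / rect_weight d m k *
     (\<Sum>i\<le>k. rect_coeff d m p i * rect_coeff d m q (k - i))) (d - k))"
  unfolding rect_conv_def rect_conv_weight_eq rect_coeff_def
  by (simp add: sum_distrib_left mult_ac)

lemma rect_coeff_rect_conv:
  assumes "k \<le> d"
  shows "rect_coeff d m (rect_conv d m p q) k = (\<Sum>i\<le>k. rect_coeff d m p i * rect_coeff d m q (k - i))"
  using assms rect_weight_pos[of d m k]
  by (simp add: rect_conv_eq_rect_coeff_convolution coeff_sum_monom_reversed
      rect_coeff_def sgn_coeff_def flip: power_add)

lemma coeff_rect_iter_eq_0:
  assumes "d < j" "coeff (p 1) j = 0"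
  shows "coeff (rect_iter d m p n) j = 0"
  using assms
  by (cases n) (simp_all add: rect_conv_eq_rect_coeff_convolution coeff_sum_monom_reversed_eq_0)

lemma degree_prod_linear_factors:
  "degree (\<Prod>j<n. [:- c j, 1:] :: 'a::idom poly) = n"
  by (subst degree_prod_eq_sum_degree) auto

lemma coeff_prod_linear_factors_top:
  "coeff (\<Prod>j<n. [:- c j, 1:] :: 'a::idom poly) n = 1"
  using lead_coeff_prod[of "\<lambda>j. [:- c j, 1:]" "{..<n}"]
  by (simp add: degree_prod_linear_factors)

lemma coeff_prod_linear_factors_above:
  "n < i \<Longrightarrow> coeff (\<Prod>j<n. [:- c j, 1:] :: 'a::idom poly) i = 0"
  by (simp add: coeff_eq_0 degree_prod_linear_factors)

lemma coeff_prod_linear_factors_second: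
  "coeff (\<Prod>j<Suc n. [:- c j, 1:] :: 'a::idom poly) n = - (\<Sum>j<Suc n. c j)"
proof (induction n)
  case (Suc n)
  define P where "P = (\<Prod>j<Suc n. [:- c j, 1:] :: 'a poly)"
  have "(\<Prod>j<Suc (Suc n). [:- c j, 1:]) = [:- c (Suc n), 1:] * P"
    by (simp add: P_def mult.commute)
  then have "coeff (\<Prod>j<Suc (Suc n). [:- c j, 1:]) (Suc n) = - c (Suc n) * coeff P (Suc n) + coeff P n"
    by simp
  moreover have "coeff P (Suc n) = 1" "coeff P n = - (\<Sum>j<Suc n. c j)"
    by (simp_all only: P_def coeff_prod_linear_factors_top Suc.IH)
  ultimately show ?case by simp
qed simp

lemma abs_coeff_linear_factor_mult_le:
  fixes p :: "'a::linordered_idom poly"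
  shows "\<bar>coeff ([:a, 1:] * p) i\<bar> \<le> \<bar>a\<bar> * \<bar>coeff p i\<bar> + \<bar>coeff p (i - 1)\<bar>"
proof (cases i)
  case (Suc j)
  then show ?thesis using abs_triangle_ineq[of "a * coeff p i" "coeff p j"] by (simp add: abs_mult)
qed (simp add: abs_mult)

lemma abs_coeff_prod_linear_factors_le:
  fixes c :: "nat \<Rightarrow> 'a::linordered_idom"
  assumes "\<And>j. j < n \<Longrightarrow> \<bar>c j\<bar> \<le> B"
  shows "\<bar>coeff (\<Prod>j<n. [:- c j, 1:]) i\<bar> \<le> (1 + B) ^ n"
  using assms
proof (induction n arbitrary: i)
  case 0
  then show ?case by (simp add: coeff_1)
next
  case (Suc n)
  define P where "P = (\<Prod>j<n. [:- c j, 1:])"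
  have IH: "\<bar>coeff P i\<bar> \<le> (1 + B) ^ n" for i
    using Suc by (simp add: P_def)
  have "(\<Prod>j<Suc n. [:- c j, 1:]) = [:- c n, 1:] * P"
    by (simp add: P_def mult.commute)
  then have "\<bar>coeff (\<Prod>j<Suc n. [:- c j, 1:]) i\<bar> \<le> \<bar>c n\<bar> * \<bar>coeff P i\<bar> + \<bar>coeff P (i - 1)\<bar>"
    using abs_coeff_linear_factor_mult_le[of "- c n" P i] by simp
  also have "\<dots> \<le> B * (1 + B) ^ n + (1 + B) ^ n"
    using Suc.prems[of n] IH by (intro add_mono mult_mono) auto
  finally show ?case by (simp add: algebra_simps)
qed

lemma rect_coeff_prod_linear_factors:
  fixes c :: "nat \<Rightarrow> real"
  assumes "1 \<le> d" "d \<le> m"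
  shows "rect_coeff d m (\<Prod>j<d. [:- c j, 1:]) 0 = 1"
    and "rect_coeff d m (\<Prod>j<d. [:- c j, 1:]) 1 = (\<Sum>j<d. c j) / (real d * real m)"
proof -
  show "rect_coeff d m (\<Prod>j<d. [:- c j, 1:]) 0 = 1"
    by (simp add: rect_coeff_def sgn_coeff_def rect_weight_0 coeff_prod_linear_factors_top)
  obtain d' where d: "d = Suc d'" using assms(1) by (cases d) auto
  have "coeff (\<Prod>j<d. [:- c j, 1:]) (d - 1) = - (\<Sum>j<d. c j)"
    using coeff_prod_linear_factors_second[of c d'] by (simp only: d diff_Suc_1)
  then show "rect_coeff d m (\<Prod>j<d. [:- c j, 1:]) 1 = (\<Sum>j<d. c j) / (real d * real m)"
    using assms rect_weight_1[of d m] by (simp add: rect_coeff_def sgn_coeff_def)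
qed

lemma abs_rect_coeff_le: "\<bar>rect_coeff d m p k\<bar> \<le> \<bar>coeff p (d - k)\<bar>"
  using rect_weight_pos[of d m k] rect_weight_le_1[of d m k]
  by (simp add: rect_coeff_def sgn_coeff_def abs_mult mult_left_le_one_le)

lemma truncated_convolution_chain_rect_iter:
  fixes c :: "nat \<Rightarrow> nat \<Rightarrow> real"
  assumes "1 \<le> d" "d \<le> m"
    and p_Suc: "\<And>n. p (Suc n) = (\<Prod>j<d. [:- c n j, 1:])"
    and c_nonneg: "\<And>n j. 0 \<le> c n j"
    and c_mean: "\<And>n. (\<Sum>j<d. c n j) / real d = \<tau>"
  shows "truncated_convolution_chain d (\<tau> / real m) ((1 + real d * \<tau>) ^ d)
    (\<lambda>n. rect_coeff d m (rect_iter d m p n)) (\<lambda>n. rect_coeff d m (p (Suc n)))"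
proof
  fix n k
  have sum_c: "(\<Sum>j<d. c n j) = real d * \<tau>"
    using c_mean[of n] assms(1) by (simp add: field_simps)
  show "rect_coeff d m (p (Suc n)) 0 = 1"
    using rect_coeff_prod_linear_factors(1)[OF assms(1,2)] by (simp add: p_Suc)
  show "rect_coeff d m (p (Suc n)) 1 = \<tau> / real m"
    using rect_coeff_prod_linear_factors(2)[OF assms(1,2)] assms(1) by (simp add: p_Suc sum_c)
  have "\<bar>c n j\<bar> \<le> real d * \<tau>" if "j < d" for j
    using member_le_sum[of j "{..<d}" "c n"] that c_nonneg by (simp add: sum_c)
  then show "\<bar>rect_coeff d m (p (Suc n)) k\<bar> \<le> (1 + real d * \<tau>) ^ d"
    unfolding p_Suc by (intro order_trans[OF abs_rect_coeff_le abs_coeff_prod_linear_factors_le])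
  show "rect_coeff d m (rect_iter d m p 0) k = rect_coeff d m (p (Suc 0)) k"
    by simp
  show "rect_coeff d m (rect_iter d m p (Suc n)) k
      = (\<Sum>i\<le>k. rect_coeff d m (rect_iter d m p n) i * rect_coeff d m (p (Suc (Suc n))) (k - i))"
    if "k \<le> d" using that by (simp add: rect_coeff_rect_conv)
qed

section \<open>Coefficients of the rescaled convolution and of the Laguerre limit\<close>

lemma coeff_pcompose_square:
  fixes p :: "'a::comm_semiring_1 poly"
  shows "coeff (pcompose p [:0, 0, r:]) t = (if even t then r ^ (t div 2) * coeff p (t div 2) else 0)"
proof (induction p arbitrary: t)
  case (pCons a p)
  have "pcompose (pCons a p) [:0, 0, r:] = pCons a (pCons 0 (smult r (pcompose p [:0, 0, r:])))"
    by (simp add: pcompose_pCons)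
  then show ?case
    by (auto simp: pCons.IH coeff_pCons mult.assoc split: nat.split)
qed simp

lemma coeff_P_tilde:
  assumes "1 \<le> N"
  shows "coeff (P_tilde d m p N) t =
    (if even t then coeff (P_N d m p N) (t div 2) * real N ^ (t div 2) / real N ^ d else 0)"
  using assms
  by (auto simp: P_tilde_def scale_roots_def Sop_def coeff_pcompose_linear coeff_pcompose_square
      power_mult elim!: evenE)

lemma coeff_P_tilde_Suc_double:
  assumes "i \<le> d"
  shows "coeff (P_tilde d m p (Suc n)) (2 * (d - i))
    = (-1) ^ i * sgn_coeff d (rect_iter d m p n) i / real (Suc n) ^ i"
proof -
  have "y * real (Suc n) ^ (d - i) / real (Suc n) ^ d = y / real (Suc n) ^ i" for y
    using assms by (simp add: power_diff del: of_nat_Suc)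
  then show ?thesis
    by (simp add: coeff_P_tilde P_N_def sgn_coeff_def mult.assoc flip: power_add mult_2)
qed

lemma coeff_P_tilde_Suc_eq_0:
  assumes "\<And>j. d < j \<Longrightarrow> coeff (p 1) j = 0" "odd t \<or> 2 * d < t"
  shows "coeff (P_tilde d m p (Suc n)) t = 0"
  using assms by (auto simp: coeff_P_tilde P_N_def coeff_rect_iter_eq_0)

lemma coeff_laguerre:
  "coeff (laguerre d a) j = (if j \<le> d then real ((d + a) choose (d - j)) * (-1) ^ j / fact j else 0)"
  by (auto simp: laguerre_def coeff_sum)

lemma lead_coeff_laguerre_pcompose_square:
  assumes "r \<noteq> 0"
  shows "lead_coeff (pcompose (laguerre d a) [:0, 0, r:]) = r ^ d * (-1) ^ d / fact d"
proof -
  let ?L = "pcompose (laguerre d a) [:0, 0, r:]"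
  have top: "coeff ?L (2 * d) = r ^ d * (-1) ^ d / fact d"
    by (simp add: coeff_pcompose_square coeff_laguerre)
  have "degree ?L = 2 * d"
  proof (rule antisym)
    show "degree ?L \<le> 2 * d"
      by (rule degree_le) (auto simp: coeff_pcompose_square coeff_laguerre)
    show "2 * d \<le> degree ?L"
      by (rule le_degree) (simp add: top assms)
  qed
  then show ?thesis by (simp add: top)
qed

lemma coeff_laguerre_limit:
  "coeff (laguerre_limit d m \<sigma>) t =
    (if even t then (real m / \<sigma>\<^sup>2) ^ (t div 2) * coeff (laguerre d (m - d)) (t div 2) else 0)
      / lead_coeff (pcompose (laguerre d (m - d)) [:0, 0, real m / \<sigma>\<^sup>2:])"
  by (simp add: laguerre_limit_def Let_def coeff_pcompose_square)

lemma coeff_laguerre_limit_eq_0: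
  "odd t \<or> 2 * d < t \<Longrightarrow> coeff (laguerre_limit d m \<sigma>) t = 0"
  by (auto simp: coeff_laguerre_limit coeff_laguerre)

lemma coeff_laguerre_limit_double:
  assumes "d \<le> m" "0 < m" "\<sigma> \<noteq> 0" "i \<le> d"
  shows "coeff (laguerre_limit d m \<sigma>) (2 * (d - i))
    = (-1) ^ i / rect_weight d m i * ((\<sigma>\<^sup>2 / real m) ^ i / fact i)"
proof -
  obtain j where d: "d = j + i" using assms(4) by (metis le_add_diff_inverse2)
  have "i \<le> m" using assms by simp
  then show ?thesis
    using assms unfolding d
    by (simp add: coeff_laguerre_limit lead_coeff_laguerre_pcompose_square coeff_laguerre
        rect_weight_def binomial_fact power_add field_simps)
qed

theorem mainTheorem8:
  fixes d m :: nat and \<sigma> :: real and p :: "nat \<Rightarrow> real poly"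
  assumes "1 \<le> d" and "d \<le> m" and "\<sigma> > 0"
    and "\<And>i. i \<ge> 1 \<Longrightarrow> \<exists>r :: nat \<Rightarrow> real.
           p i = (\<Prod>j<d. [: - ((r j)^2), 1 :]) \<and> (\<Sum>j<d. (r j)^2) / real d = \<sigma>^2"
  shows "\<forall>k. (\<lambda>N. coeff (P_tilde d m p N) k) \<longlonglongrightarrow> coeff (laguerre_limit d m \<sigma>) k"
proof
  fix t
  have "\<forall>n. \<exists>r. p (Suc n) = (\<Prod>j<d. [:- ((r j)^2), 1:]) \<and> (\<Sum>j<d. (r j)^2) / real d = \<sigma>^2"
    using assms(4) by simp
  then obtain r where r: "\<And>n. p (Suc n) = (\<Prod>j<d. [:- ((r n j)^2), 1:])"
    "\<And>n. (\<Sum>j<d. (r n j)^2) / real d = \<sigma>^2"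
    by metis
  interpret truncated_convolution_chain d "\<sigma>\<^sup>2 / real m" "(1 + real d * \<sigma>\<^sup>2) ^ d"
    "\<lambda>n. rect_coeff d m (rect_iter d m p n)" "\<lambda>n. rect_coeff d m (p (Suc n))"
    using assms(1,2) r by (intro truncated_convolution_chain_rect_iter) auto
  have "(\<lambda>n. coeff (P_tilde d m p (Suc n)) t) \<longlonglongrightarrow> coeff (laguerre_limit d m \<sigma>) t"
  proof (cases "odd t \<or> 2 * d < t")
    case True
    have "coeff (p 1) j = 0" if "d < j" for j
      using r(1)[of 0] that by (simp add: coeff_prod_linear_factors_above)
    with True show ?thesis by (simp add: coeff_P_tilde_Suc_eq_0 coeff_laguerre_limit_eq_0)
  next
    case False
    then obtain i where i: "i \<le> d" "t = 2 * (d - i)"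
      by (intro that[of "d - t div 2"]) auto
    have "(\<lambda>n. (-1) ^ i / rect_weight d m i
          * (rect_coeff d m (rect_iter d m p n) i / real (Suc n) ^ i))
        \<longlonglongrightarrow> (-1) ^ i / rect_weight d m i * ((\<sigma>\<^sup>2 / real m) ^ i / fact i)"
      by (intro tendsto_mult_left \<alpha>_divide_power_tendsto i)
    then show ?thesis
      using i assms(1-3) rect_weight_pos[of d m i]
      by (simp add: coeff_P_tilde_Suc_double coeff_laguerre_limit_double rect_coeff_def)
  qed
  then show "(\<lambda>N. coeff (P_tilde d m p N) t) \<longlonglongrightarrow> coeff (laguerre_limit d m \<sigma>) t"
    by (rule LIMSEQ_imp_Suc)
qed

end
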